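(* Let $f:[0,\infty)\to\mathbb{R}$ be convex with $f(1)=0$ and strictly convex at $x=1$, and let $G:[0,\mathsf{D_m}(f))\to[0,\infty)$ be continuous and non-decreasing with $G(0)=0$ and $G(x)>0$ for all $x>0$. Then $(G,f)$ is divergence-subadditive if and only if it is information-subadditive.
   Context: All alphabets are finite. For distributions $p\ll q$ on a finite set $\mathcal{X}$ and convex $f$ with $f(1)=0$, $D_f(p\|q)=\sum_x q(x) f(p(x)/q(x))$ with the convention $0f(0/0)=0$. $\mathsf{D_m}(f)=f(0)+\lim_{t\to\infty} f(t)/t$. Define $\mathcal{D}_{G,f}(p\|q)=G(D_f(p\|q))$ and, for random variables $X,Y$ on finite sets, $I_{G,f}(X;Y)=\min_{q_Y}\sum_x p_X(x)\,G(D_f(p_{Y|X=x}\|q_Y))$, the minimum over distributions $q_Y$ on the alphabet of $Y$. $(G,f)$ is divergence-subadditive if for all finite sets $\mathcal{Y},\mathcal{Z}$ and all distributions $q_Y\ll r_Y$ on $\mathcal{Y}$, $q_Z\ll r_Z$ on $\mathcal{Z}$: $\mathcal{D}_{G,f}(q_Yq_Z\|r_Yr_Z)\le \mathcal{D}_{G,f}(q_Y\|r_Y)+\mathcal{D}_{G,f}(q_Z\|r_Z)$. $(G,f)$ is information-subadditive if for all random variables $X,Y,Z$ on finite sets with $p_{XYZ}=p_Xp_{Y|X}p_{Z|X}$ (i.e. $Y\to X\to Z$ is a Markov chain), $I_{G,f}(X;YZ)\le I_{G,f}(X;Y)+I_{G,f}(X;Z)$. *)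

theory Defs
  imports "HOL-Analysis.Analysis"
begin

definition is_dist :: "'a set \<Rightarrow> ('a \<Rightarrow> real) \<Rightarrow> bool" where
  "is_dist A p \<longleftrightarrow> finite A \<and> (\<forall>x\<in>A. 0 \<le> p x) \<and> sum p A = 1"

definition abs_cont :: "'a set \<Rightarrow> ('a \<Rightarrow> real) \<Rightarrow> ('a \<Rightarrow> real) \<Rightarrow> bool" where
  "abs_cont A p q \<longleftrightarrow> (\<forall>x\<in>A. q x = 0 \<longrightarrow> p x = 0)"

text \<open>f-divergence with the convention 0 f(0/0) = 0.\<close>
definition fdiv :: "(real \<Rightarrow> real) \<Rightarrow> 'a set \<Rightarrow> ('a \<Rightarrow> real) \<Rightarrow> ('a \<Rightarrow> real) \<Rightarrow> real" where
  "fdiv f A p q = (\<Sum>x\<in>A. if q x = 0 then 0 else q x * f (p x / q x))"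

definition Dm :: "(real \<Rightarrow> real) \<Rightarrow> ereal" where
  "Dm f = ereal (f 0) + Lim at_top (\<lambda>t. ereal (f t / t))"

definition strictly_convex_at_1 :: "(real \<Rightarrow> real) \<Rightarrow> bool" where
  "strictly_convex_at_1 f \<longleftrightarrow>
     (\<forall>s t a. 0 \<le> s \<and> 0 \<le> t \<and> s \<noteq> t \<and> 0 < a \<and> a < 1 \<and> a * s + (1 - a) * t = 1
        \<longrightarrow> f 1 < a * f s + (1 - a) * f t)"

text \<open>Divergence-subadditivity; finite alphabets are represented as finite sets of naturals
  (every finite set is in bijection with one).\<close>
definition div_subadditive :: "(real \<Rightarrow> real) \<Rightarrow> (real \<Rightarrow> real) \<Rightarrow> bool" where
  "div_subadditive G f \<longleftrightarrow>
     (\<forall>(AY::nat set) (AZ::nat set) qY rY qZ rZ.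
        is_dist AY qY \<and> is_dist AY rY \<and> abs_cont AY qY rY \<and>
        is_dist AZ qZ \<and> is_dist AZ rZ \<and> abs_cont AZ qZ rZ \<longrightarrow>
        G (fdiv f (AY \<times> AZ) (\<lambda>(y,z). qY y * qZ z) (\<lambda>(y,z). rY y * rZ z))
          \<le> G (fdiv f AY qY rY) + G (fdiv f AZ qZ rZ))"

text \<open>I_{G,f}(X;Y) for X with law pX on AX and channel W (W x = p_{Y|X=x}) into AY.
  Only x with pX x > 0 matter; the minimum is over distributions q on AY for which all
  divergences are defined (p_{Y|X=x} << q), rendered as an infimum.\<close>
definition Info :: "(real \<Rightarrow> real) \<Rightarrow> (real \<Rightarrow> real) \<Rightarrow> 'a set \<Rightarrow> ('a \<Rightarrow> real)
    \<Rightarrow> 'b set \<Rightarrow> ('a \<Rightarrow> 'b \<Rightarrow> real) \<Rightarrow> real" where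
  "Info G f AX pX AY W =
     Inf ((\<lambda>q. \<Sum>x\<in>{x\<in>AX. 0 < pX x}. pX x * G (fdiv f AY (W x) q)) `
          {q. is_dist AY q \<and> (\<forall>x\<in>AX. 0 < pX x \<longrightarrow> abs_cont AY (W x) q)})"

definition info_subadditive :: "(real \<Rightarrow> real) \<Rightarrow> (real \<Rightarrow> real) \<Rightarrow> bool" where
  "info_subadditive G f \<longleftrightarrow>
     (\<forall>(AX::nat set) (AY::nat set) (AZ::nat set) pX W V.
        is_dist AX pX \<and>
        (\<forall>x\<in>AX. 0 < pX x \<longrightarrow> is_dist AY (W x) \<and> is_dist AZ (V x)) \<longrightarrow>
        Info G f AX pX (AY \<times> AZ) (\<lambda>x (y,z). W x y * V x z)
          \<le> Info G f AX pX AY W + Info G f AX pX AZ V)"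

end

theory Submission
  imports Defs
begin

text \<open>
  Divergence-subadditivity gives information-subadditivity directly: the product of
  near-optimal output distributions for Y and for Z is a candidate output distribution for YZ.

  Conversely, let q_Y, q_Z be absolutely continuous w.r.t. r_Y, r_Z, which may be assumed to have
  full support. Let X be binary with P(X = 1) = theta, and let Y, Z given X be independent with
  laws r_Y, r_Z if X = 0 and q_Y, q_Z if X = 1. Taking r_Y as output distribution gives
  I(X;Y) <= theta G(D(q_Y || r_Y)), and likewise for Z. For YZ, let P = q_Y q_Z and R = r_Y r_Z.
  Strict convexity of f at 1 makes D(R || q) small only when q is close to R, and close to R the
  divergence D(P || q) is continuous in q; so every candidate q either pays (1 - theta) G(delta)
  on the branch X = 0, which exceeds theta G(D(P || R)) once theta is small, or pays at least
  theta (G(D(P || R)) - epsilon) on the branch X = 1. Dividing by theta and letting epsilon go to 0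
  gives G(D(P || R)) <= G(D(q_Y || r_Y)) + G(D(q_Z || r_Z)). Strict convexity at 1 also keeps all
  divergences strictly below D_m(f), inside the domain of G.
\<close>

lemma convex_on_supporting_line:
  fixes f :: "real \<Rightarrow> real"
  assumes f: "convex_on I f" and I: "a \<in> I" "b \<in> I" and x: "a < x" "x < b"
  shows "\<exists>c. \<forall>t\<in>I. f x + c * (t - x) \<le> f t"
proof -
  define c where "c = (SUP s\<in>{s\<in>I. s < x}. (f x - f s) / (x - s))"
  have left_le_right: "(f x - f s) / (x - s) \<le> (f x - f t) / (x - t)"
    if "s \<in> I" "t \<in> I" "s < x" "x < t" for s t
    using convex_on_slope_le[OF f that(1,2), of x] that
    by (metis minus_diff_eq minus_divide_divide order_trans)
  have bdd: "bdd_above ((\<lambda>s. (f x - f s) / (x - s)) ` {s\<in>I. s < x})"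
    using left_le_right I x by (intro bdd_aboveI[of _ "(f x - f b) / (x - b)"]) auto
  have "f x + c * (t - x) \<le> f t" if t: "t \<in> I" for t
  proof (cases t x rule: linorder_cases)
    case less
    have "(f x - f t) / (x - t) \<le> c"
      unfolding c_def using t less bdd by (intro cSUP_upper) auto
    then show ?thesis using less by (simp add: field_simps)
  next
    case greater
    have "c \<le> (f x - f t) / (x - t)"
      unfolding c_def using I x t greater by (intro cSUP_least left_le_right) auto
    then show ?thesis using greater by (simp add: field_simps)
  qed simp
  then show ?thesis by blast
qed

lemma exists_weight_balancing:
  fixes a b :: real
  assumes "0 \<le> a" "0 < b"
  shows "\<exists>\<theta>. 0 < \<theta> \<and> \<theta> < 1 \<and> \<theta> * a \<le> (1 - \<theta>) * b"
proof -
  have "0 < b / (a + b + 1)" "b / (a + b + 1) < 1" "b / (a + b + 1) * a \<le> (1 - b / (a + b + 1)) * b"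
    using assms by (auto simp: field_simps)
  then show ?thesis by blast
qed

lemma exists_ge_average:
  fixes h :: "'a \<Rightarrow> real"
  assumes "finite S" "S \<noteq> {}"
  shows "\<exists>s\<in>S. sum h S / card S \<le> h s"
proof (rule ccontr)
  assume "\<not> ?thesis"
  then have "sum h S < (\<Sum>s\<in>S. sum h S / card S)"
    using assms by (intro sum_strict_mono) auto
  then show False using assms by simp
qed

lemma deviations_of_both_signs:
  fixes q r :: "'a \<Rightarrow> real"
  assumes S: "finite S" "s0 \<in> S" and sums: "sum q S = sum r S"
    and far: "0 < \<rho>" "\<rho> \<le> \<bar>q s0 - r s0\<bar>"
  shows "\<exists>s\<in>S. \<exists>s'\<in>S. q s \<le> r s - \<rho> / (2 * real (card S)) \<and> r s' + \<rho> / (2 * real (card S)) \<le> q s'"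
proof -
  define up where "up s = max (q s - r s) 0" for s
  define down where "down s = max (r s - q s) 0" for s
  have "sum up S - sum down S = (\<Sum>s\<in>S. q s - r s)"
    unfolding up_def down_def sum_subtractf[symmetric] by (intro sum.cong) auto
  then have balanced: "sum up S = sum down S" using sums by (simp add: sum_subtractf)
  have "\<bar>q s0 - r s0\<bar> \<le> (\<Sum>s\<in>S. \<bar>q s - r s\<bar>)"
    using S by (intro member_le_sum) auto
  also have "\<dots> = sum up S + sum down S"
    unfolding up_def down_def sum.distrib[symmetric] by (intro sum.cong) auto
  finally have half: "\<rho> / 2 \<le> sum up S" "\<rho> / 2 \<le> sum down S"
    using far balanced by auto
  have "0 < card S" using S card_gt_0_iff by blast
  then have pos: "0 < \<rho> / (2 * real (card S))" using far by simp
  have avg: "\<exists>s\<in>S. \<rho> / (2 * real (card S)) \<le> h s" if "\<rho> / 2 \<le> sum h S" for h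
  proof -
    obtain s where "s \<in> S" "sum h S / card S \<le> h s"
      using exists_ge_average[of S h] S by blast
    moreover have "\<rho> / (2 * real (card S)) \<le> sum h S / card S"
      using divide_right_mono[OF that, of "card S"] by (simp add: field_simps)
    ultimately show ?thesis using order_trans by blast
  qed
  obtain s where s: "s \<in> S" "\<rho> / (2 * real (card S)) \<le> down s" using avg[OF half(2)] by blast
  obtain s' where s': "s' \<in> S" "\<rho> / (2 * real (card S)) \<le> up s'" using avg[OF half(1)] by blast
  have "q s \<le> r s - \<rho> / (2 * real (card S))" "r s' + \<rho> / (2 * real (card S)) \<le> q s'"
    using s s' pos by (auto simp: up_def down_def max_def split: if_splits)
  with s s' show ?thesis by blast
qed

lemma is_dist_prod:
  assumes "is_dist A p" "is_dist B q"
  shows "is_dist (A \<times> B) (\<lambda>(y, z). p y * q z)"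
  using assms by (auto simp: is_dist_def sum.cartesian_product[symmetric] sum_product[symmetric])

lemma is_dist_le_one:
  assumes "is_dist A p" "x \<in> A"
  shows "p x \<le> 1"
  using assms member_le_sum[of x A p] by (auto simp: is_dist_def)

lemma is_dist_has_pos:
  assumes "is_dist A p"
  obtains x where "x \<in> A" "0 < p x"
proof -
  have "\<not> (\<forall>x\<in>A. p x \<le> 0)"
    using assms sum_nonpos[of A p] by (auto simp: is_dist_def)
  then show ?thesis using that by auto
qed

lemma is_dist_subset:
  assumes "is_dist A q" "B \<subseteq> A" "\<forall>x\<in>A - B. q x = 0"
  shows "is_dist B q"
proof -
  have "sum q B = sum q A"
    using assms by (intro sum.mono_neutral_left) (auto simp: is_dist_def)
  then show ?thesis using assms finite_subset by (auto simp: is_dist_def)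
qed

lemma fdiv_subset:
  assumes "finite A" "B \<subseteq> A" "\<forall>x\<in>A - B. r x = 0"
  shows "fdiv f B p r = fdiv f A p r"
  unfolding fdiv_def using assms by (intro sum.mono_neutral_left) auto

lemma is_dist_mixture:
  assumes pX: "is_dist AX pX" and W: "\<forall>x\<in>AX. 0 < pX x \<longrightarrow> is_dist AY (W x)"
  defines "q \<equiv> \<lambda>y. \<Sum>x\<in>{x\<in>AX. 0 < pX x}. pX x * W x y"
  shows "is_dist AY q" and "\<forall>x\<in>AX. 0 < pX x \<longrightarrow> abs_cont AY (W x) q"
proof -
  let ?X = "{x\<in>AX. 0 < pX x}"
  have finX: "finite ?X" using pX by (simp add: is_dist_def)
  obtain x0 where "x0 \<in> AX" "0 < pX x0" using is_dist_has_pos[OF pX] .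
  then have finY: "finite AY" using W by (auto simp: is_dist_def)
  have terms_nonneg: "0 \<le> pX x * W x y" if "x \<in> ?X" "y \<in> AY" for x y
    using W that by (simp add: is_dist_def)
  have "sum q AY = (\<Sum>x\<in>?X. pX x * sum (W x) AY)"
    unfolding q_def by (simp add: sum.swap[of _ AY] sum_distrib_left)
  also have "\<dots> = sum pX ?X" using W by (intro sum.cong) (auto simp: is_dist_def)
  also have "\<dots> = sum pX AX"
    using pX by (intro sum.mono_neutral_left) (auto simp: is_dist_def less_le)
  finally show "is_dist AY q"
    using pX finY terms_nonneg by (auto simp: is_dist_def q_def intro!: sum_nonneg)
  show "\<forall>x\<in>AX. 0 < pX x \<longrightarrow> abs_cont AY (W x) q"
    unfolding abs_cont_def
  proof (intro ballI impI)
    fix x y assume "x \<in> AX" "0 < pX x" "y \<in> AY" "q y = 0"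
    then have "pX x * W x y = 0"
      using sum_nonneg_eq_0_iff[OF finX, of "\<lambda>x. pX x * W x y"] terms_nonneg by (auto simp: q_def)
    then show "W x y = 0" using \<open>0 < pX x\<close> by simp
  qed
qed

lemma isCont_sum_components_eps_delta:
  fixes h :: "'a \<Rightarrow> real \<Rightarrow> real"
  assumes S: "finite S" and cont: "\<forall>s\<in>S. isCont (h s) (x s)" and e: "0 < e"
  shows "\<exists>d>0. \<forall>y. (\<forall>s\<in>S. \<bar>y s - x s\<bar> < d) \<longrightarrow>
           \<bar>(\<Sum>s\<in>S. h s (y s)) - (\<Sum>s\<in>S. h s (x s))\<bar> < e"
proof (cases "S = {}")
  case True
  then show ?thesis using e by (auto intro: exI[of _ 1])
next
  case False
  define e' where "e' = e / card S"
  have e': "0 < e'" using S False e by (simp add: e'_def card_gt_0_iff)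
  have "\<forall>s\<in>S. \<exists>d>0. \<forall>u. \<bar>u - x s\<bar> < d \<longrightarrow> \<bar>h s u - h s (x s)\<bar> < e'"
    using cont e' unfolding continuous_at_eps_delta dist_real_def by blast
  then obtain d where d: "\<forall>s\<in>S. 0 < d s \<and> (\<forall>u. \<bar>u - x s\<bar> < d s \<longrightarrow> \<bar>h s u - h s (x s)\<bar> < e')"
    by metis
  have "\<bar>(\<Sum>s\<in>S. h s (y s)) - (\<Sum>s\<in>S. h s (x s))\<bar> < e"
    if y: "\<forall>s\<in>S. \<bar>y s - x s\<bar> < Min (d ` S)" for y
  proof -
    have "\<bar>(\<Sum>s\<in>S. h s (y s)) - (\<Sum>s\<in>S. h s (x s))\<bar> \<le> (\<Sum>s\<in>S. \<bar>h s (y s) - h s (x s)\<bar>)"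
      unfolding sum_subtractf[symmetric] by (rule sum_abs)
    also have "\<dots> < (\<Sum>s\<in>S. e')"
    proof (rule sum_strict_mono[OF S False])
      fix s assume "s \<in> S"
      then have "\<bar>y s - x s\<bar> < d s" using y S by (meson Min_le finite_imageI image_eqI less_le_trans)
      then show "\<bar>h s (y s) - h s (x s)\<bar> < e'" using d \<open>s \<in> S\<close> by blast
    qed
    also have "\<dots> = e" using S False by (simp add: e'_def card_gt_0_iff)
    finally show ?thesis .
  qed
  moreover have "0 < Min (d ` S)" using S False d by (simp add: Min_gr_iff)
  ultimately show ?thesis by blast
qed

definition info_feasible :: "'a set \<Rightarrow> ('a \<Rightarrow> real) \<Rightarrow> 'b set \<Rightarrow> ('a \<Rightarrow> 'b \<Rightarrow> real) \<Rightarrow> ('b \<Rightarrow> real) set"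
  where "info_feasible AX pX AY W = {q. is_dist AY q \<and> (\<forall>x\<in>AX. 0 < pX x \<longrightarrow> abs_cont AY (W x) q)}"

definition info_cost :: "(real \<Rightarrow> real) \<Rightarrow> (real \<Rightarrow> real) \<Rightarrow> 'a set \<Rightarrow> ('a \<Rightarrow> real)
    \<Rightarrow> 'b set \<Rightarrow> ('a \<Rightarrow> 'b \<Rightarrow> real) \<Rightarrow> ('b \<Rightarrow> real) \<Rightarrow> real"
  where "info_cost G f AX pX AY W q = (\<Sum>x\<in>{x\<in>AX. 0 < pX x}. pX x * G (fdiv f AY (W x) q))"

lemma Info_eq_Inf_info_cost:
  "Info G f AX pX AY W = Inf (info_cost G f AX pX AY W ` info_feasible AX pX AY W)"
  unfolding Info_def info_cost_def info_feasible_def ..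

lemma info_feasible_nonempty:
  assumes "is_dist AX pX" "\<forall>x\<in>AX. 0 < pX x \<longrightarrow> is_dist AY (W x)"
  shows "info_feasible AX pX AY W \<noteq> {}"
  using is_dist_mixture[OF assms] unfolding info_feasible_def by blast

locale divergence_generator =
  fixes f :: "real \<Rightarrow> real"
  assumes convex: "convex_on {0..} f" and f_one: "f 1 = 0"
begin

definition subgradient :: real
  where "subgradient = (SOME c. \<forall>t\<in>{0..}. f 1 + c * (t - 1) \<le> f t)"

lemma subgradient_le: "0 \<le> t \<Longrightarrow> f 1 + subgradient * (t - 1) \<le> f t"
  using someI_ex[OF convex_on_supporting_line[OF convex, of 0 2 1]]
  unfolding subgradient_def by simp

text \<open>Subtracting the supporting line at 1 does not change divergences between distributions,
  because the linear part integrates to zero.\<close>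

definition tilt :: "real \<Rightarrow> real"
  where "tilt t = f t - subgradient * (t - 1)"

lemma tilt_nonneg: "0 \<le> t \<Longrightarrow> 0 \<le> tilt t"
  using subgradient_le f_one by (simp add: tilt_def)

lemma convex_tilt: "convex_on {0..} tilt"
proof -
  have "convex_on {0..} (\<lambda>t. f t + (- subgradient * t + subgradient))"
    using convex by (intro convex_on_add) (auto intro!: convex_on_linorderI simp: algebra_simps)
  then show ?thesis unfolding tilt_def by (simp add: algebra_simps)
qed

lemma tilt_le_scaled:
  assumes "0 \<le> s" "0 \<le> \<mu>" "\<mu> \<le> 1"
  shows "tilt ((1 - \<mu>) + \<mu> * s) \<le> \<mu> * tilt s"
  using convex_onD[OF convex_tilt, of \<mu> 1 s] assms f_one by (simp add: tilt_def)

lemma tilt_antimono: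
  assumes "0 \<le> s" "s \<le> t" "t \<le> 1"
  shows "tilt t \<le> tilt s"
proof (cases "s = t")
  case False
  define \<mu> where "\<mu> = (1 - t) / (1 - s)"
  have "1 - s \<noteq> 0" using assms False by simp
  then have "\<mu> - \<mu> * s = 1 - t" by (simp add: \<mu>_def diff_divide_distrib[symmetric] field_simps)
  moreover have "0 \<le> \<mu>" "\<mu> \<le> 1" using assms False by (auto simp: \<mu>_def)
  ultimately have \<mu>: "(1 - \<mu>) + \<mu> * s = t" "0 \<le> \<mu>" "\<mu> \<le> 1" by simp_all
  then have "tilt t \<le> \<mu> * tilt s" using tilt_le_scaled[OF assms(1) \<mu>(2,3)] by simp
  also have "\<dots> \<le> tilt s" using \<mu> tilt_nonneg[OF assms(1)] by (simp add: mult_left_le_one_le)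
  finally show ?thesis .
qed simp

lemma tilt_over_mono:
  assumes "1 < s" "s \<le> t"
  shows "tilt s / s \<le> tilt t / t"
proof -
  define \<mu> where "\<mu> = (s - 1) / (t - 1)"
  have "t - 1 \<noteq> 0" using assms by simp
  then have "\<mu> * t - \<mu> = s - 1" by (simp add: \<mu>_def diff_divide_distrib[symmetric] field_simps)
  moreover have "0 \<le> \<mu>" "\<mu> \<le> 1" "\<mu> \<le> s / t" using assms by (auto simp: \<mu>_def field_simps)
  ultimately have \<mu>: "(1 - \<mu>) + \<mu> * t = s" "0 \<le> \<mu>" "\<mu> \<le> 1" "\<mu> \<le> s / t" by simp_all
  have "tilt s \<le> \<mu> * tilt t" using tilt_le_scaled[of t \<mu>] \<mu> assms by simp
  also have "\<dots> \<le> (s / t) * tilt t" using \<mu> tilt_nonneg[of t] assms by (intro mult_right_mono) auto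
  finally show ?thesis using assms by (simp add: field_simps)
qed

lemma fdiv_self: "fdiv f A p p = 0"
  unfolding fdiv_def using f_one by (intro sum.neutral) auto

lemma fdiv_eq_fdiv_tilt:
  assumes "is_dist A p" "is_dist A q" "abs_cont A p q"
  shows "fdiv f A p q = fdiv tilt A p q"
proof -
  have "fdiv f A p q = fdiv tilt A p q + subgradient * (\<Sum>x\<in>A. p x - q x)"
    unfolding fdiv_def sum_distrib_left sum.distrib[symmetric]
    using assms(3) by (intro sum.cong) (auto simp: abs_cont_def tilt_def field_simps)
  then show ?thesis using assms by (simp add: sum_subtractf is_dist_def)
qed

lemma fdiv_nonneg:
  assumes "is_dist A p" "is_dist A q" "abs_cont A p q"
  shows "0 \<le> fdiv f A p q"
proof -
  have "0 \<le> fdiv tilt A p q"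
    unfolding fdiv_def using assms(1,2) by (intro sum_nonneg) (auto simp: is_dist_def intro!: mult_nonneg_nonneg tilt_nonneg)
  then show ?thesis using fdiv_eq_fdiv_tilt[OF assms] by simp
qed

abbreviation fdiv_range :: "real set"
  where "fdiv_range \<equiv> {x. 0 \<le> x \<and> ereal x < Dm f}"

definition chord_slope :: "real \<Rightarrow> real"
  where "chord_slope t = (f t - f 0) / t"

lemma chord_slope_mono:
  assumes "0 < u" "u \<le> v"
  shows "chord_slope u \<le> chord_slope v"
proof (cases "u = v")
  case False
  have "(f 0 - f u) / (0 - u) \<le> (f 0 - f v) / (0 - v)"
    by (rule convex_on_slope_le(1)[OF convex]) (use assms False in auto)
  then show ?thesis by (simp add: chord_slope_def minus_divide_left)
qed simp

definition asymptotic_slope :: ereal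
  where "asymptotic_slope = (SUP t\<in>{0<..}. ereal (chord_slope t))"

lemma chord_slope_le_asymptotic: "0 < t \<Longrightarrow> ereal (chord_slope t) \<le> asymptotic_slope"
  unfolding asymptotic_slope_def by (rule SUP_upper) auto

lemma chord_slope_tendsto: "((\<lambda>t. ereal (chord_slope t)) \<longlongrightarrow> asymptotic_slope) at_top"
proof (rule order_tendstoI)
  fix y assume "y < asymptotic_slope"
  then obtain t0 where t0: "0 < t0" "y < ereal (chord_slope t0)"
    unfolding asymptotic_slope_def by (auto simp: less_SUP_iff)
  show "\<forall>\<^sub>F t in at_top. y < ereal (chord_slope t)"
    using eventually_ge_at_top[of t0]
    by eventually_elim (use t0 chord_slope_mono[of t0] in \<open>fastforce intro: less_le_trans\<close>)
next
  fix y assume y: "asymptotic_slope < y"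
  show "\<forall>\<^sub>F t in at_top. ereal (chord_slope t) < y"
    using eventually_gt_at_top[of 0]
    by eventually_elim (use y chord_slope_le_asymptotic in \<open>fastforce intro: le_less_trans\<close>)
qed

lemma Dm_eq: "Dm f = ereal (f 0) + asymptotic_slope"
proof -
  have "asymptotic_slope \<noteq> -\<infinity>"
    using chord_slope_le_asymptotic[of 1] by auto
  moreover have "((\<lambda>t. ereal (f 0 / t)) \<longlongrightarrow> ereal 0) at_top"
    unfolding lim_ereal by (intro tendsto_divide_0[OF tendsto_const] filterlim_at_top_imp_at_infinity filterlim_ident)
  ultimately have "((\<lambda>t. ereal (chord_slope t) + ereal (f 0 / t)) \<longlongrightarrow> asymptotic_slope + ereal 0) at_top"
    by (intro tendsto_add_ereal_general chord_slope_tendsto) auto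
  moreover have "\<forall>\<^sub>F t in at_top. ereal (chord_slope t) + ereal (f 0 / t) = ereal (f t / t)"
    using eventually_gt_at_top[of 0] by eventually_elim (simp add: chord_slope_def diff_divide_distrib)
  ultimately have "((\<lambda>t. ereal (f t / t)) \<longlongrightarrow> asymptotic_slope) at_top"
    by (auto intro: Lim_transform_eventually)
  then show ?thesis unfolding Dm_def by (simp add: tendsto_Lim)
qed

lemma isCont_f_pos: "0 < x \<Longrightarrow> isCont f x"
proof -
  have "convex_on {0<..} f"
    by (rule convex_on_subset[OF convex]) (auto simp: convex_real_interval)
  then have "continuous_on {0<..} f"
    by (intro convex_on_continuous) auto
  then show "0 < x \<Longrightarrow> isCont f x"
    using continuous_on_eq_continuous_at[of "{0<..}" f] by auto
qed

lemma fdiv_continuous_in_reference: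
  assumes S: "finite S" and r: "\<forall>s\<in>S. 0 < r s" and p: "\<forall>s\<in>S. 0 \<le> p s" and \<eta>: "0 < \<eta>"
  shows "\<exists>\<rho>>0. \<forall>q. (\<forall>s\<in>S. 0 < q s \<and> \<bar>q s - r s\<bar> < \<rho>) \<longrightarrow> \<bar>fdiv f S p q - fdiv f S p r\<bar> < \<eta>"
proof -
  define h where "h s u = u * f (p s / u)" for s u
  have "isCont (h s) (r s)" if "s \<in> S" for s
  proof (cases "p s = 0")
    case True
    then have "h s = (\<lambda>u. u * f 0)" by (simp add: h_def fun_eq_iff)
    then show ?thesis by (simp add: isCont_mult)
  next
    case False
    then have "isCont f (p s / r s)" using that p r by (intro isCont_f_pos) (simp add: less_le)
    moreover have "isCont (\<lambda>u. p s / u) (r s)" using that r by (intro continuous_intros) auto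
    ultimately show ?thesis
      unfolding h_def by (intro isCont_mult continuous_ident isCont_o2[where f = "\<lambda>u. p s / u" and g = f])
  qed
  then obtain \<rho> where "0 < \<rho>" and \<rho>: "\<forall>q. (\<forall>s\<in>S. \<bar>q s - r s\<bar> < \<rho>) \<longrightarrow>
      \<bar>(\<Sum>s\<in>S. h s (q s)) - (\<Sum>s\<in>S. h s (r s))\<bar> < \<eta>"
    using isCont_sum_components_eps_delta[OF S _ \<eta>] by blast
  have "fdiv f S p q = (\<Sum>s\<in>S. h s (q s))" if "\<forall>s\<in>S. 0 < q s" for q
    unfolding fdiv_def h_def using that by (intro sum.cong) auto
  then show ?thesis using \<open>0 < \<rho>\<close> \<rho> r by auto
qed

lemma tilt_perspective_ge_deficit:
  assumes "0 < q" "q \<le> 1" "0 < c" "q \<le> r - c"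
  shows "c * (tilt (1 + c) / (1 + c)) \<le> q * tilt (r / q)"
proof -
  have "r - q \<le> (r - q) / q" using divide_left_mono[of q 1 "r - q"] assms by simp
  then have "c \<le> (r - q) / q" using assms by linarith
  then have ratio: "1 + c \<le> r / q" using assms by (simp add: diff_divide_distrib)
  have "c * (tilt (1 + c) / (1 + c)) \<le> r * (tilt (r / q) / (r / q))"
    using assms tilt_over_mono[OF _ ratio] tilt_nonneg[of "1 + c"]
    by (intro mult_mono) auto
  also have "\<dots> = q * tilt (r / q)" using assms by simp
  finally show ?thesis .
qed

lemma tilt_perspective_ge_surplus:
  assumes "0 < q" "q \<le> 1" "0 \<le> c" "0 \<le> r" "r + c \<le> q"
  shows "c * tilt (1 - c) \<le> q * tilt (r / q)"
proof -
  have "q - r \<le> (q - r) / q" using divide_left_mono[of q 1 "q - r"] assms by simp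
  then have "c \<le> (q - r) / q" using assms by linarith
  then have ratio: "r / q \<le> 1 - c" using assms by (simp add: diff_divide_distrib)
  have "0 \<le> r / q" using assms by simp
  then show ?thesis
    using assms tilt_antimono[OF _ ratio] tilt_nonneg[of "1 - c"] by (intro mult_mono) auto
qed

end

locale strict_divergence_generator = divergence_generator +
  assumes strict_at_1: "strictly_convex_at_1 f"
begin

lemma strict_at_1_pos:
  assumes "0 \<le> s" "0 \<le> t" "s \<noteq> t" "0 < a" "a < 1" "a * s + (1 - a) * t = 1"
  shows "0 < a * f s + (1 - a) * f t"
  using strict_at_1 assms f_one unfolding strictly_convex_at_1_def by fastforce

lemma tilt_pos_one_side:
  assumes "0 \<le> s" "s < 1" "1 < t"
  shows "0 < tilt s \<or> 0 < tilt t"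
proof -
  define a where "a = (t - 1) / (t - s)"
  have "a * s + (1 - a) * t = t - a * (t - s)" by (simp add: algebra_simps)
  also have "\<dots> = 1" using assms by (simp add: a_def)
  finally have a: "0 < a" "a < 1" "a * s + (1 - a) * t = 1"
    using assms by (auto simp: a_def field_simps)
  have "0 < a * f s + (1 - a) * f t" using assms a by (intro strict_at_1_pos) auto
  also have "\<dots> = a * tilt s + (1 - a) * tilt t + subgradient * (a * s + (1 - a) * t - 1)"
    by (simp add: tilt_def algebra_simps)
  also have "\<dots> = a * tilt s + (1 - a) * tilt t"
    using a(3) by simp
  finally show ?thesis using a by (smt (verit) mult_nonneg_nonpos)
qed

lemma chord_slope_lt_asymptotic:
  assumes "0 < t"
  shows "ereal (chord_slope t) < asymptotic_slope"
proof (rule ccontr)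
  \<comment> \<open>Otherwise f is affine with slope L = chord_slope t on [t, oo); the slope inequality through 1 then
    gives f 0 + L <= f 1 = 0, while strict convexity at 1 between 0 and u gives f 0 + L > 0.\<close>
  assume "\<not> ?thesis"
  then have L: "asymptotic_slope = ereal (chord_slope t)"
    using chord_slope_le_asymptotic[OF assms] by simp
  define u where "u = max t 2"
  have affine: "f v = f 0 + v * chord_slope t" if "t \<le> v" for v
  proof -
    have "chord_slope v = chord_slope t"
      using chord_slope_mono[OF assms that] chord_slope_le_asymptotic[of v] assms that L by simp
    then show ?thesis using assms that by (simp add: chord_slope_def field_simps)
  qed
  have "(f 1 - f u) / (1 - u) \<le> (f 1 - f (2 * u)) / (1 - 2 * u)"
       "(f 1 - f (2 * u)) / (1 - 2 * u) \<le> (f u - f (2 * u)) / (u - 2 * u)"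
    using convex_on_slope_le[OF convex, of 1 "2 * u" u] by (auto simp: u_def)
  moreover have "(f u - f (2 * u)) / (u - 2 * u) = chord_slope t"
    using affine[of u] affine[of "2 * u"] by (simp add: u_def field_simps)
  ultimately have "(f 1 - f u) / (1 - u) \<le> chord_slope t" by linarith
  then have "chord_slope t * (1 - u) \<le> f 1 - f u"
    by (simp add: u_def neg_divide_le_eq)
  then have nonpos: "f 0 + chord_slope t \<le> 0"
    using affine[of u] f_one by (simp add: u_def algebra_simps)
  have "0 < (1 - 1 / u) * f 0 + (1 - (1 - 1 / u)) * f u"
    by (intro strict_at_1_pos) (auto simp: u_def field_simps)
  also have "\<dots> = f 0 + chord_slope t"
    using affine[of u] by (simp add: u_def field_simps)
  finally show False using nonpos by simp
qed

lemma perspective_lt_asymptote: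
  assumes L: "asymptotic_slope = ereal L" and "0 < q" "0 < p"
  shows "q * f (p / q) < q * f 0 + p * L"
proof -
  have "f t - f 0 < L * t" if "0 < t" for t
    using chord_slope_lt_asymptotic[OF that] L that by (simp add: chord_slope_def pos_divide_less_eq)
  then have "f (p / q) - f 0 < L * (p / q)"
    using assms by (simp only: divide_pos_pos)
  then have "q * (f (p / q) - f 0) < q * (L * (p / q))"
    using assms by (intro mult_strict_left_mono)
  then show ?thesis using assms by (simp add: algebra_simps)
qed

lemma fdiv_lt_Dm:
  assumes p: "is_dist A p" and q: "is_dist A q" and pq: "abs_cont A p q"
  shows "ereal (fdiv f A p q) < Dm f"
proof (cases asymptotic_slope)
  case (real L)
  define summand where "summand x = (if q x = 0 then 0 else q x * f (p x / q x))" for x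
  have summand_le: "summand x \<le> q x * f 0 + p x * L" if "x \<in> A" for x
  proof (cases "q x = 0 \<or> p x = 0")
    case True
    then show ?thesis using pq that by (auto simp: summand_def abs_cont_def)
  next
    case False
    then have "0 < q x" "0 < p x" using p q that by (auto simp: is_dist_def less_le)
    then show ?thesis using perspective_lt_asymptote[OF real] by (simp add: summand_def less_imp_le)
  qed
  obtain x0 where x0: "x0 \<in> A" "0 < p x0" using is_dist_has_pos[OF p] .
  then have "0 < q x0" using q pq by (auto simp: abs_cont_def is_dist_def less_le)
  then have "summand x0 < q x0 * f 0 + p x0 * L"
    using perspective_lt_asymptote[OF real] x0 by (simp add: summand_def)
  then have "fdiv f A p q < (\<Sum>x\<in>A. q x * f 0 + p x * L)"
    unfolding fdiv_def summand_def[symmetric]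
    using p x0 summand_le by (intro sum_strict_mono_ex1) (auto simp: is_dist_def)
  also have "\<dots> = f 0 + L"
    using p q by (simp add: sum.distrib sum_distrib_right[symmetric] is_dist_def)
  finally show ?thesis by (simp add: Dm_eq real)
next
  case MInf
  then show ?thesis using chord_slope_le_asymptotic[of 1] by simp
qed (simp add: Dm_eq)

lemma Dm_pos: "0 < Dm f"
  using fdiv_lt_Dm[of "{0::nat}" "\<lambda>_. 1" "\<lambda>_. 1"] by (simp add: is_dist_def abs_cont_def fdiv_self zero_ereal_def)

lemma fdiv_in_fdiv_range:
  assumes "is_dist A p" "is_dist A q" "abs_cont A p q"
  shows "fdiv f A p q \<in> fdiv_range"
  using fdiv_nonneg[OF assms] fdiv_lt_Dm[OF assms] by simp

lemma fdiv_range_has_small_pos: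
  assumes "0 < \<delta>"
  obtains d where "0 < d" "d \<le> \<delta>" "d \<in> fdiv_range"
proof -
  obtain e where e: "0 < e" "ereal e < Dm f"
    using ereal_dense2[OF Dm_pos] by auto
  have "ereal (min \<delta> e) < Dm f"
    using le_less_trans[OF _ e(2), of "ereal (min \<delta> e)"] by simp
  then show ?thesis using that[of "min \<delta> e"] assms e(1) by simp
qed

lemma fdiv_bounded_below_far:
  assumes r: "is_dist S r" and \<rho>: "0 < \<rho>"
  shows "\<exists>\<delta>>0. \<forall>q. is_dist S q \<and> (\<forall>s\<in>S. 0 < q s) \<and> (\<exists>s\<in>S. \<rho> \<le> \<bar>q s - r s\<bar>) \<longrightarrow> \<delta> \<le> fdiv f S r q"
proof -
  have S: "finite S" "S \<noteq> {}" using r is_dist_has_pos[OF r] by (auto simp: is_dist_def)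
  \<comment> \<open>A far q falls short of r by c at some s and exceeds it by c at some s', so the
    ratios r/q there lie beyond 1 + c and below 1 - c; tilt is positive on one of these sides.\<close>
  define c where "c = min (1 / 2) (\<rho> / (2 * real (card S)))"
  have c: "0 < c" "c \<le> 1 / 2" "c \<le> \<rho> / (2 * real (card S))"
    using S \<rho> by (auto simp: c_def card_gt_0_iff)
  define \<delta> where "\<delta> = c * tilt (1 - c) + c * (tilt (1 + c) / (1 + c))"
  have "0 < tilt (1 - c) \<or> 0 < tilt (1 + c)"
    using c by (intro tilt_pos_one_side) auto
  then have "0 < \<delta>"
    using c tilt_nonneg[of "1 - c"] tilt_nonneg[of "1 + c"] unfolding \<delta>_def
    by (auto intro: add_pos_nonneg add_nonneg_pos)
  moreover have "\<delta> \<le> fdiv f S r q"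
    if q: "is_dist S q" "\<forall>s\<in>S. 0 < q s" and far: "s0 \<in> S" "\<rho> \<le> \<bar>q s0 - r s0\<bar>" for q s0
  proof -
    obtain s s' where s: "s \<in> S" "q s \<le> r s - \<rho> / (2 * real (card S))"
      and s': "s' \<in> S" "r s' + \<rho> / (2 * real (card S)) \<le> q s'"
      using deviations_of_both_signs[of S s0 q r \<rho>] S far \<rho> q r by (auto simp: is_dist_def)
    have "s \<noteq> s'" using s s' c by auto
    have terms_nonneg: "0 \<le> q x * tilt (r x / q x)" if "x \<in> S" for x
      using q r that by (intro mult_nonneg_nonneg tilt_nonneg) (auto simp: is_dist_def less_imp_le)
    have "\<delta> \<le> q s' * tilt (r s' / q s') + q s * tilt (r s / q s)"
      unfolding \<delta>_def using s s' q r c is_dist_le_one[OF q(1)]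
      by (intro add_mono tilt_perspective_ge_surplus tilt_perspective_ge_deficit) (auto simp: is_dist_def)
    also have "\<dots> = (\<Sum>x\<in>{s, s'}. q x * tilt (r x / q x))"
      using \<open>s \<noteq> s'\<close> by simp
    also have "\<dots> \<le> (\<Sum>x\<in>S. q x * tilt (r x / q x))"
      using S s s' terms_nonneg by (intro sum_mono2) auto
    also have "\<dots> = fdiv tilt S r q"
      unfolding fdiv_def using q by (intro sum.cong) auto
    also have "\<dots> = fdiv f S r q"
      using q r by (intro fdiv_eq_fdiv_tilt[symmetric]) (auto simp: abs_cont_def)
    finally show ?thesis .
  qed
  ultimately show ?thesis by blast
qed

end

definition binary :: "real \<Rightarrow> nat \<Rightarrow> real"
  where "binary \<theta> x = (if x = 0 then 1 - \<theta> else \<theta>)"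

lemma is_dist_binary: "0 \<le> \<theta> \<Longrightarrow> \<theta> \<le> 1 \<Longrightarrow> is_dist {0, 1} (binary \<theta>)"
  by (simp add: is_dist_def binary_def)

lemma binary_support: "0 < \<theta> \<Longrightarrow> \<theta> < 1 \<Longrightarrow> {x\<in>{0, 1}. 0 < binary \<theta> x} = {0, 1}"
  by (auto simp: binary_def)

lemma info_feasible_binary:
  assumes "0 < \<theta>" "\<theta> < 1"
  shows "info_feasible {0, 1} (binary \<theta>) A (\<lambda>x. if x = 0 then r else p) =
    {q. is_dist A q \<and> abs_cont A r q \<and> abs_cont A p q}"
  using assms by (auto simp: info_feasible_def binary_def)

lemma info_cost_binary:
  assumes "0 < \<theta>" "\<theta> < 1"
  shows "info_cost G f {0, 1} (binary \<theta>) A (\<lambda>x. if x = 0 then r else p) q =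
    (1 - \<theta>) * G (fdiv f A r q) + \<theta> * G (fdiv f A p q)"
  unfolding info_cost_def binary_support[OF assms] by (simp add: binary_def)

locale divergence_transform = strict_divergence_generator +
  fixes G :: "real \<Rightarrow> real"
  assumes G_cont: "continuous_on {x. 0 \<le> x \<and> ereal x < Dm f} G"
    and G_mono: "mono_on {x. 0 \<le> x \<and> ereal x < Dm f} G"
    and G_nonneg: "\<forall>x. 0 \<le> x \<and> ereal x < Dm f \<longrightarrow> 0 \<le> G x"
    and G_zero: "G 0 = 0"
    and G_pos: "\<forall>x. 0 < x \<and> ereal x < Dm f \<longrightarrow> 0 < G x"
begin

lemma G_fdiv_nonneg:
  assumes "is_dist A p" "is_dist A q" "abs_cont A p q"
  shows "0 \<le> G (fdiv f A p q)"
  using fdiv_in_fdiv_range[OF assms] G_nonneg by simp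

lemma info_cost_nonneg:
  assumes "\<forall>x\<in>AX. 0 < pX x \<longrightarrow> is_dist AY (W x)" "q \<in> info_feasible AX pX AY W"
  shows "0 \<le> info_cost G f AX pX AY W q"
  unfolding info_cost_def using assms
  by (intro sum_nonneg mult_nonneg_nonneg G_fdiv_nonneg) (auto simp: info_feasible_def)

lemma Info_le_info_cost:
  assumes "\<forall>x\<in>AX. 0 < pX x \<longrightarrow> is_dist AY (W x)" "q \<in> info_feasible AX pX AY W"
  shows "Info G f AX pX AY W \<le> info_cost G f AX pX AY W q"
  unfolding Info_eq_Inf_info_cost using assms info_cost_nonneg[OF assms(1)]
  by (intro cInf_lower bdd_belowI2[of _ 0]) auto

lemma Info_greatest:
  assumes "is_dist AX pX" "\<forall>x\<in>AX. 0 < pX x \<longrightarrow> is_dist AY (W x)"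
    and "\<And>q. q \<in> info_feasible AX pX AY W \<Longrightarrow> v \<le> info_cost G f AX pX AY W q"
  shows "v \<le> Info G f AX pX AY W"
  unfolding Info_eq_Inf_info_cost using assms info_feasible_nonempty[OF assms(1,2)]
  by (intro cINF_greatest) auto

lemma Info_approx:
  assumes "is_dist AX pX" "\<forall>x\<in>AX. 0 < pX x \<longrightarrow> is_dist AY (W x)" "0 < e"
  obtains q where "q \<in> info_feasible AX pX AY W" "info_cost G f AX pX AY W q < Info G f AX pX AY W + e"
proof -
  have "\<not> Info G f AX pX AY W + e \<le> Info G f AX pX AY W" using assms(3) by simp
  then show ?thesis using Info_greatest[OF assms(1,2)] that by (meson not_le)
qed

lemma div_subadditive_imp_info_subadditive:
  assumes div_sub: "div_subadditive G f"
  shows "info_subadditive G f"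
  unfolding info_subadditive_def
proof (intro allI impI)
  fix AX AY AZ :: "nat set" and pX W V
  assume "is_dist AX pX \<and> (\<forall>x\<in>AX. 0 < pX x \<longrightarrow> is_dist AY (W x) \<and> is_dist AZ (V x))"
  then have pX: "is_dist AX pX" and W: "\<forall>x\<in>AX. 0 < pX x \<longrightarrow> is_dist AY (W x)"
    and V: "\<forall>x\<in>AX. 0 < pX x \<longrightarrow> is_dist AZ (V x)" by auto
  let ?WV = "\<lambda>x (y, z). W x y * V x z"
  have WV: "\<forall>x\<in>AX. 0 < pX x \<longrightarrow> is_dist (AY \<times> AZ) (?WV x)"
    using W V by (auto intro: is_dist_prod)
  show "Info G f AX pX (AY \<times> AZ) ?WV \<le> Info G f AX pX AY W + Info G f AX pX AZ V"
  proof (rule field_le_epsilon)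
    fix e :: real assume "0 < e"
    then have "0 < e / 2" by simp
    obtain qY where qY: "qY \<in> info_feasible AX pX AY W"
      "info_cost G f AX pX AY W qY < Info G f AX pX AY W + e / 2"
      using Info_approx[OF pX W \<open>0 < e / 2\<close>] .
    obtain qZ where qZ: "qZ \<in> info_feasible AX pX AZ V"
      "info_cost G f AX pX AZ V qZ < Info G f AX pX AZ V + e / 2"
      using Info_approx[OF pX V \<open>0 < e / 2\<close>] .
    let ?q = "\<lambda>(y, z). qY y * qZ z"
    have q: "?q \<in> info_feasible AX pX (AY \<times> AZ) ?WV"
      using qY(1) qZ(1) by (auto simp: info_feasible_def abs_cont_def intro: is_dist_prod)
    have "G (fdiv f (AY \<times> AZ) (?WV x) ?q) \<le> G (fdiv f AY (W x) qY) + G (fdiv f AZ (V x) qZ)"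
      if "x \<in> AX" "0 < pX x" for x
    proof -
      have "is_dist AY (W x) \<and> is_dist AY qY \<and> abs_cont AY (W x) qY \<and>
          is_dist AZ (V x) \<and> is_dist AZ qZ \<and> abs_cont AZ (V x) qZ"
        using W V qY(1) qZ(1) that by (simp add: info_feasible_def)
      from div_sub[unfolded div_subadditive_def, rule_format, OF this] show ?thesis by simp
    qed
    then have "info_cost G f AX pX (AY \<times> AZ) ?WV ?q \<le>
        info_cost G f AX pX AY W qY + info_cost G f AX pX AZ V qZ"
      unfolding info_cost_def sum.distrib[symmetric] distrib_left[symmetric]
      by (intro sum_mono mult_left_mono) auto
    then show "Info G f AX pX (AY \<times> AZ) ?WV \<le> Info G f AX pX AY W + Info G f AX pX AZ V + e"
      using Info_le_info_cost[OF WV q] qY(2) qZ(2) by linarith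
  qed
qed

lemma G_fdiv_ge_when_close:
  assumes p: "is_dist S p" and r: "is_dist S r" and r_pos: "\<forall>s\<in>S. 0 < r s" and \<epsilon>: "0 < \<epsilon>"
  shows "\<exists>\<delta>>0. \<forall>q. is_dist S q \<and> abs_cont S r q \<and> fdiv f S r q < \<delta> \<longrightarrow>
           G (fdiv f S p r) - \<epsilon> \<le> G (fdiv f S p q)"
proof -
  let ?D = "fdiv f S p r"
  have "?D \<in> fdiv_range"
    using r_pos by (intro fdiv_in_fdiv_range[OF p r]) (auto simp: abs_cont_def)
  then obtain \<eta> where "0 < \<eta>" and \<eta>: "\<forall>x\<in>fdiv_range. \<bar>x - ?D\<bar> < \<eta> \<longrightarrow> \<bar>G x - G ?D\<bar> < \<epsilon>"
    using G_cont \<epsilon> unfolding continuous_on_iff dist_real_def by blast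
  obtain \<rho> where "0 < \<rho>"
    and \<rho>: "\<forall>q. (\<forall>s\<in>S. 0 < q s \<and> \<bar>q s - r s\<bar> < \<rho>) \<longrightarrow> \<bar>fdiv f S p q - ?D\<bar> < \<eta>"
    using fdiv_continuous_in_reference[of S r p \<eta>] p r r_pos \<open>0 < \<eta>\<close> by (auto simp: is_dist_def)
  obtain \<delta> where "0 < \<delta>"
    and \<delta>: "\<forall>q. is_dist S q \<and> (\<forall>s\<in>S. 0 < q s) \<and> (\<exists>s\<in>S. \<rho> \<le> \<bar>q s - r s\<bar>) \<longrightarrow> \<delta> \<le> fdiv f S r q"
    using fdiv_bounded_below_far[OF r \<open>0 < \<rho>\<close>] by blast
  have "G ?D - \<epsilon> \<le> G (fdiv f S p q)"
    if q: "is_dist S q" "abs_cont S r q" and close: "fdiv f S r q < \<delta>" for q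
  proof -
    have q_pos: "\<forall>s\<in>S. 0 < q s"
      using q r_pos by (force simp: is_dist_def abs_cont_def less_le)
    then have "\<forall>s\<in>S. \<bar>q s - r s\<bar> < \<rho>"
      using \<delta> q close by (meson not_le)
    then have "\<bar>fdiv f S p q - ?D\<bar> < \<eta>" using \<rho> q_pos by blast
    moreover have "fdiv f S p q \<in> fdiv_range"
      using q_pos by (intro fdiv_in_fdiv_range[OF p q(1)]) (auto simp: abs_cont_def)
    ultimately show ?thesis using \<eta> by fastforce
  qed
  then show ?thesis using \<open>0 < \<delta>\<close> by blast
qed

lemma Info_binary_le:
  assumes \<theta>: "0 < \<theta>" "\<theta> < 1" and p: "is_dist A p" and r: "is_dist A r" and pr: "abs_cont A p r"
  shows "Info G f {0, 1} (binary \<theta>) A (\<lambda>x. if x = 0 then r else p) \<le> \<theta> * G (fdiv f A p r)"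
proof -
  have "r \<in> info_feasible {0, 1} (binary \<theta>) A (\<lambda>x. if x = 0 then r else p)"
    unfolding info_feasible_binary[OF \<theta>] using r pr by (simp add: abs_cont_def)
  then have "Info G f {0, 1} (binary \<theta>) A (\<lambda>x. if x = 0 then r else p) \<le>
      info_cost G f {0, 1} (binary \<theta>) A (\<lambda>x. if x = 0 then r else p) r"
    using p r by (intro Info_le_info_cost) (auto simp del: One_nat_def)
  also have "\<dots> = \<theta> * G (fdiv f A p r)"
    unfolding info_cost_binary[OF \<theta>] by (simp add: fdiv_self G_zero)
  finally show ?thesis .
qed

lemma Info_binary_ge:
  assumes p: "is_dist S p" and r: "is_dist S r" and r_pos: "\<forall>s\<in>S. 0 < r s" and \<epsilon>: "0 < \<epsilon>"
  shows "\<exists>\<theta>. 0 < \<theta> \<and> \<theta> < 1 \<and>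
           \<theta> * (G (fdiv f S p r) - \<epsilon>) \<le> Info G f {0, 1} (binary \<theta>) S (\<lambda>x. if x = 0 then r else p)"
proof -
  let ?D = "fdiv f S p r"
  obtain \<delta> where "0 < \<delta>" and \<delta>: "\<forall>q. is_dist S q \<and> abs_cont S r q \<and> fdiv f S r q < \<delta> \<longrightarrow>
      G ?D - \<epsilon> \<le> G (fdiv f S p q)"
    using G_fdiv_ge_when_close[OF p r r_pos \<epsilon>] by blast
  obtain \<delta>' where "0 < \<delta>'" "\<delta>' \<le> \<delta>" and \<delta>'_dom: "\<delta>' \<in> fdiv_range"
    using fdiv_range_has_small_pos[OF \<open>0 < \<delta>\<close>] by blast
  then have G\<delta>': "0 < G \<delta>'" using G_pos by simp
  have GD: "0 \<le> G ?D"
    using r_pos by (intro G_fdiv_nonneg[OF p r]) (auto simp: abs_cont_def)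
  \<comment> \<open>For q far from r, the branch X = 0 alone then pays for theta G D.\<close>
  obtain \<theta> where \<theta>: "0 < \<theta>" "\<theta> < 1" and balance: "\<theta> * G ?D \<le> (1 - \<theta>) * G \<delta>'"
    using exists_weight_balancing[OF GD G\<delta>'] by blast
  have "\<theta> * (G ?D - \<epsilon>) \<le> (1 - \<theta>) * G (fdiv f S r q) + \<theta> * G (fdiv f S p q)"
    if q: "is_dist S q" "abs_cont S r q" "abs_cont S p q" for q
  proof -
    have Gr: "0 \<le> G (fdiv f S r q)" and Gp: "0 \<le> G (fdiv f S p q)"
      using G_fdiv_nonneg q p r by auto
    show ?thesis
    proof (cases "fdiv f S r q < \<delta>'")
      case True
      then have "G ?D - \<epsilon> \<le> G (fdiv f S p q)" using \<delta> q \<open>\<delta>' \<le> \<delta>\<close> by simp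
      then show ?thesis using \<theta> Gr by (simp add: mult_left_mono add_increasing)
    next
      case False
      then have "G \<delta>' \<le> G (fdiv f S r q)"
        using mono_onD[OF G_mono \<delta>'_dom fdiv_in_fdiv_range[OF r q(1,2)]] by simp
      then have "\<theta> * G ?D \<le> (1 - \<theta>) * G (fdiv f S r q)"
        using balance \<theta> by (meson mult_left_mono diff_ge_0_iff_ge less_imp_le order_trans)
      then show ?thesis
        using mult_nonneg_nonneg[of \<theta> "G (fdiv f S p q)"] mult_pos_pos[of \<theta> \<epsilon>] \<theta> \<epsilon> Gp
        unfolding right_diff_distrib by linarith
    qed
  qed
  then have "\<theta> * (G ?D - \<epsilon>) \<le> Info G f {0, 1} (binary \<theta>) S (\<lambda>x. if x = 0 then r else p)"
    using p r \<theta> by (intro Info_greatest is_dist_binary)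
      (auto simp: info_feasible_binary[OF \<theta>] info_cost_binary[OF \<theta>] simp del: One_nat_def)
  then show ?thesis using \<theta> by blast
qed

lemma info_subadditive_imp_div_subadditive_full_support:
  fixes AY AZ :: "nat set"
  assumes info_sub: "info_subadditive G f"
    and Y: "is_dist AY qY" "is_dist AY rY" "\<forall>y\<in>AY. 0 < rY y"
    and Z: "is_dist AZ qZ" "is_dist AZ rZ" "\<forall>z\<in>AZ. 0 < rZ z"
  shows "G (fdiv f (AY \<times> AZ) (\<lambda>(y, z). qY y * qZ z) (\<lambda>(y, z). rY y * rZ z))
           \<le> G (fdiv f AY qY rY) + G (fdiv f AZ qZ rZ)"
proof (rule field_le_epsilon)
  fix \<epsilon> :: real assume "0 < \<epsilon>"
  let ?P = "\<lambda>(y, z). qY y * qZ z" and ?R = "\<lambda>(y, z). rY y * rZ z"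
  let ?W = "\<lambda>x. if x = 0 then rY else qY" and ?V = "\<lambda>x. if x = 0 then rZ else qZ"
  have P: "is_dist (AY \<times> AZ) ?P" and R: "is_dist (AY \<times> AZ) ?R"
    using Y Z by (auto intro: is_dist_prod)
  have "\<forall>s\<in>AY \<times> AZ. 0 < ?R s" using Y(3) Z(3) by auto
  then obtain \<theta> where \<theta>: "0 < \<theta>" "\<theta> < 1"
    and lower: "\<theta> * (G (fdiv f (AY \<times> AZ) ?P ?R) - \<epsilon>)
      \<le> Info G f {0, 1} (binary \<theta>) (AY \<times> AZ) (\<lambda>x. if x = 0 then ?R else ?P)"
    using Info_binary_ge[OF P R _ \<open>0 < \<epsilon>\<close>] by blast
  have "is_dist {0, 1} (binary \<theta>) \<and>
      (\<forall>x\<in>{0, 1}. 0 < binary \<theta> x \<longrightarrow> is_dist AY (?W x) \<and> is_dist AZ (?V x))"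
    using Y Z \<theta> is_dist_binary[of \<theta>] by (simp del: One_nat_def)
  note channels_sub = info_sub[unfolded info_subadditive_def, rule_format, OF this]
  note lower
  also have "Info G f {0, 1} (binary \<theta>) (AY \<times> AZ) (\<lambda>x. if x = 0 then ?R else ?P)
      = Info G f {0, 1} (binary \<theta>) (AY \<times> AZ) (\<lambda>x (y, z). ?W x y * ?V x z)"
    by (rule arg_cong[where f = "Info G f {0, 1} (binary \<theta>) (AY \<times> AZ)"]) (auto simp: fun_eq_iff)
  also have "\<dots> \<le> Info G f {0, 1} (binary \<theta>) AY ?W + Info G f {0, 1} (binary \<theta>) AZ ?V"
    by (rule channels_sub)
  also have "\<dots> \<le> \<theta> * G (fdiv f AY qY rY) + \<theta> * G (fdiv f AZ qZ rZ)"
    using Y Z \<theta> by (intro add_mono Info_binary_le) (auto simp: abs_cont_def)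
  finally have "\<theta> * (G (fdiv f (AY \<times> AZ) ?P ?R) - \<epsilon>) \<le> \<theta> * (G (fdiv f AY qY rY) + G (fdiv f AZ qZ rZ))"
    by (simp add: distrib_left)
  then show "G (fdiv f (AY \<times> AZ) ?P ?R) \<le> G (fdiv f AY qY rY) + G (fdiv f AZ qZ rZ) + \<epsilon>"
    using \<theta> by (simp add: mult_le_cancel_left_pos)
qed

lemma info_subadditive_imp_div_subadditive:
  assumes info_sub: "info_subadditive G f"
  shows "div_subadditive G f"
  unfolding div_subadditive_def
proof (intro allI impI)
  fix AY AZ :: "nat set" and qY rY qZ rZ
  assume "is_dist AY qY \<and> is_dist AY rY \<and> abs_cont AY qY rY \<and>
    is_dist AZ qZ \<and> is_dist AZ rZ \<and> abs_cont AZ qZ rZ"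
  then have Y: "is_dist AY qY" "is_dist AY rY" "abs_cont AY qY rY"
    and Z: "is_dist AZ qZ" "is_dist AZ rZ" "abs_cont AZ qZ rZ" by auto
  define AY' where "AY' = {y\<in>AY. 0 < rY y}"
  define AZ' where "AZ' = {z\<in>AZ. 0 < rZ z}"
  have offY: "\<forall>y\<in>AY - AY'. rY y = 0 \<and> qY y = 0"
    using Y unfolding AY'_def is_dist_def abs_cont_def by (auto simp: less_le)
  have offZ: "\<forall>z\<in>AZ - AZ'. rZ z = 0 \<and> qZ z = 0"
    using Z unfolding AZ'_def is_dist_def abs_cont_def by (auto simp: less_le)
  have subsets: "AY' \<subseteq> AY" "AZ' \<subseteq> AZ" by (auto simp: AY'_def AZ'_def)
  have Y': "is_dist AY' qY" "is_dist AY' rY" and Z': "is_dist AZ' qZ" "is_dist AZ' rZ"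
    using is_dist_subset[OF Y(1) subsets(1)] is_dist_subset[OF Y(2) subsets(1)]
      is_dist_subset[OF Z(1) subsets(2)] is_dist_subset[OF Z(2) subsets(2)] offY offZ by auto
  have fin: "finite AY" "finite AZ" using Y Z by (auto simp: is_dist_def)
  have "fdiv f (AY' \<times> AZ') (\<lambda>(y, z). qY y * qZ z) (\<lambda>(y, z). rY y * rZ z)
      = fdiv f (AY \<times> AZ) (\<lambda>(y, z). qY y * qZ z) (\<lambda>(y, z). rY y * rZ z)"
    using fin subsets offY offZ by (intro fdiv_subset) auto
  moreover have "fdiv f AY' qY rY = fdiv f AY qY rY" "fdiv f AZ' qZ rZ = fdiv f AZ qZ rZ"
    using fin subsets offY offZ by (auto intro!: fdiv_subset)
  moreover have "G (fdiv f (AY' \<times> AZ') (\<lambda>(y, z). qY y * qZ z) (\<lambda>(y, z). rY y * rZ z))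
      \<le> G (fdiv f AY' qY rY) + G (fdiv f AZ' qZ rZ)"
    using Y' Z' by (intro info_subadditive_imp_div_subadditive_full_support[OF info_sub])
      (auto simp: AY'_def AZ'_def)
  ultimately show "G (fdiv f (AY \<times> AZ) (\<lambda>(y, z). qY y * qZ z) (\<lambda>(y, z). rY y * rZ z))
      \<le> G (fdiv f AY qY rY) + G (fdiv f AZ qZ rZ)"
    by simp
qed

end

theorem theorem1:
  fixes f G :: "real \<Rightarrow> real"
  assumes f_convex: "convex_on {0..} f"
    and f_one: "f 1 = 0"
    and f_strict: "strictly_convex_at_1 f"
    and G_cont: "continuous_on {x. 0 \<le> x \<and> ereal x < Dm f} G"
    and G_mono: "mono_on {x. 0 \<le> x \<and> ereal x < Dm f} G"
    and G_nonneg: "\<forall>x. 0 \<le> x \<and> ereal x < Dm f \<longrightarrow> 0 \<le> G x"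
    and G_zero: "G 0 = 0"
    and G_pos: "\<forall>x. 0 < x \<and> ereal x < Dm f \<longrightarrow> 0 < G x"
  shows "div_subadditive G f \<longleftrightarrow> info_subadditive G f"
proof -
  interpret divergence_transform f G
    using assms by unfold_locales
  show ?thesis
    using div_subadditive_imp_info_subadditive info_subadditive_imp_div_subadditive by blast
qed

end
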